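(* Let $X$ be a Banach space of analytic functions on $\mathbb{U}$ such that $X\hookrightarrow H_1$, and let $E$ be an order-continuous Banach sequence lattice. If $\lambda\in E$, then the multiplier operator $M_\lambda\colon X\to E$, $M_\lambda f=\{\lambda_n\hat f(n)\}$, is (well defined, bounded and) compact.
   Context: $\mathbb{U}$ is the open unit disk, $H_1$ the Hardy space on $\mathbb{U}$, $f=\sum_{n\ge0}\hat f(n)z^n$ the Taylor expansion; "$\hookrightarrow$" denotes continuous inclusion. A Banach sequence lattice on $\mathbb{Z}_+$ is a Banach space $E$ of sequences with $|y_n|\le|x_n|$ for all $n$, $x\in E$ implying $y\in E$ and $\|y\|_E\le\|x\|_E$. It is order-continuous if every nonnegative nonincreasing sequence in $E$ converging to $0$ pointwise converges to $0$ in norm. $\{e_n\}$ denotes the standard unit vectors. *)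

theory Defs
  imports "HOL-Complex_Analysis.Complex_Analysis"
begin

text \<open>A complex Banach space whose elements are complex-valued functions on a type 'a;
  two elements are identified when they agree on the set D (the domain of the functions).\<close>
definition banach_fun_space ::
  "'a set \<Rightarrow> ('a \<Rightarrow> complex) set \<Rightarrow> (('a \<Rightarrow> complex) \<Rightarrow> real) \<Rightarrow> bool" where
  "banach_fun_space D V N \<longleftrightarrow>
     (\<lambda>_. 0) \<in> V \<and>
     (\<forall>f\<in>V. \<forall>g\<in>V. (\<lambda>z. f z + g z) \<in> V) \<and>
     (\<forall>c. \<forall>f\<in>V. (\<lambda>z. c * f z) \<in> V) \<and>
     (\<forall>f\<in>V. 0 \<le> N f \<and> (N f = 0 \<longleftrightarrow> (\<forall>z\<in>D. f z = 0))) \<and>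
     (\<forall>f\<in>V. \<forall>g\<in>V. N (\<lambda>z. f z + g z) \<le> N f + N g) \<and>
     (\<forall>c. \<forall>f\<in>V. N (\<lambda>z. c * f z) = norm c * N f) \<and>
     (\<forall>s. (\<forall>k. s k \<in> V) \<and>
          (\<forall>e>0. \<exists>K. \<forall>m\<ge>K. \<forall>n\<ge>K. N (\<lambda>z. s m z - s n z) < e)
          \<longrightarrow> (\<exists>g\<in>V. (\<lambda>k. N (\<lambda>z. s k z - g z)) \<longlonglongrightarrow> 0))"

definition banach_analytic_space :: "(complex \<Rightarrow> complex) set \<Rightarrow> ((complex \<Rightarrow> complex) \<Rightarrow> real) \<Rightarrow> bool" where
  "banach_analytic_space X N \<longleftrightarrow>
     banach_fun_space (ball 0 1) X N \<and> (\<forall>f\<in>X. f holomorphic_on ball 0 1)"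

definition hardy_mean1 :: "(complex \<Rightarrow> complex) \<Rightarrow> real \<Rightarrow> real" where
  "hardy_mean1 f r = (1 / (2 * pi)) * integral {0..2*pi} (\<lambda>t. norm (f (of_real r * cis t)))"

definition hardy_norm1 :: "(complex \<Rightarrow> complex) \<Rightarrow> real" where
  "hardy_norm1 f = (SUP r\<in>{0..<1}. hardy_mean1 f r)"

definition H1 :: "(complex \<Rightarrow> complex) set" where
  "H1 = {f. f holomorphic_on ball 0 1 \<and> bdd_above (hardy_mean1 f ` {0..<1})}"

definition cont_incl_H1 :: "(complex \<Rightarrow> complex) set \<Rightarrow> ((complex \<Rightarrow> complex) \<Rightarrow> real) \<Rightarrow> bool" where
  "cont_incl_H1 X N \<longleftrightarrow> X \<subseteq> H1 \<and> (\<exists>C. \<forall>f\<in>X. hardy_norm1 f \<le> C * N f)"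

definition taylor_coeff :: "(complex \<Rightarrow> complex) \<Rightarrow> nat \<Rightarrow> complex" where
  "taylor_coeff f n = (deriv ^^ n) f 0 / of_nat (fact n)"

definition banach_seq_lattice :: "(nat \<Rightarrow> complex) set \<Rightarrow> ((nat \<Rightarrow> complex) \<Rightarrow> real) \<Rightarrow> bool" where
  "banach_seq_lattice E N \<longleftrightarrow>
     banach_fun_space UNIV E N \<and>
     (\<forall>x\<in>E. \<forall>y. (\<forall>n. norm (y n) \<le> norm (x n)) \<longrightarrow> y \<in> E \<and> N y \<le> N x)"

definition order_continuous :: "(nat \<Rightarrow> complex) set \<Rightarrow> ((nat \<Rightarrow> complex) \<Rightarrow> real) \<Rightarrow> bool" where
  "order_continuous E N \<longleftrightarrow>
     (\<forall>x :: nat \<Rightarrow> nat \<Rightarrow> complex.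
        (\<forall>k. x k \<in> E) \<and>
        (\<forall>k n. Im (x k n) = 0 \<and> 0 \<le> Re (x k n)) \<and>
        (\<forall>k n. Re (x (Suc k) n) \<le> Re (x k n)) \<and>
        (\<forall>n. (\<lambda>k. x k n) \<longlonglongrightarrow> 0)
        \<longrightarrow> (\<lambda>k. N (x k)) \<longlonglongrightarrow> 0)"

end

theory Submission
  imports Defs
begin

text \<open>
  Cauchy's formula on the circle of radius \<open>r\<close> bounds the \<open>n\<close>-th Taylor coefficient by
  \<open>r\<^sup>-\<^sup>n\<close> times the integral mean of \<open>|f|\<close>, so on the unit ball of \<open>X\<close> all coefficients
  are bounded by one constant \<open>C\<close>; domination by \<open>C |\<lambda>|\<close> makes \<open>M\<^sub>\<lambda>\<close> bounded. For
  compactness, a subsequence has coefficientwise limits \<open>l\<close> (Tychonoff). The differences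
  \<open>\<lambda>\<^sub>n (f\<^sub>k(n) - l\<^sub>n)\<close> tend to zero on the finitely many indices \<open>n < m\<close>, while on
  \<open>n \<ge> m\<close> they are dominated by \<open>2C |\<lambda>\<^sub>n|\<close>, whose norm tends to \<open>0\<close> with \<open>m\<close> by
  order continuity.
\<close>

lemma has_integral_rescale_to_unit_interval:
  fixes h :: "real \<Rightarrow> real"
  assumes "continuous_on {0..2*pi} h"
  shows "((\<lambda>x. h (2*pi*x)) has_integral integral {0..2*pi} h / (2*pi)) {0..1}"
proof -
  have "(h has_integral integral {0..2*pi} h) {0..2*pi}"
    using assms by (intro integrable_integral integrable_continuous_real)
  moreover have "(\<lambda>x. x / (2*pi)) ` {0..2*pi} = {0..1}"
  proof
    show "{0..1} \<subseteq> (\<lambda>x. x / (2*pi)) ` {0..2*pi}"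
      by (auto intro!: image_eqI[of _ _ "2*pi*x" for x])
  qed auto
  ultimately show ?thesis
    using has_integral_stretch_real_iff[of "2*pi" h "integral {0..2*pi} h / (2*pi)" 0 "2*pi"]
    by simp
qed

lemma norm_taylor_coeff_mult_power_le_hardy_mean1:
  assumes hol: "f holomorphic_on ball 0 1" and r: "0 < r" "r < 1"
  shows "norm (taylor_coeff f n) * r^n \<le> hardy_mean1 f r"
proof -
  have sub: "cball 0 r \<subseteq> ball (0::complex) 1" using r by auto
  have contf: "continuous_on (cball 0 r) f"
    using holomorphic_on_imp_continuous_on[OF hol] continuous_on_subset sub by blast
  have holr: "f holomorphic_on ball 0 r"
    using hol holomorphic_on_subset sub ball_subset_cball by blast
  define I where "I = 2*pi*\<i>/fact n * (deriv ^^ n) f 0"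
  define \<gamma>' where "\<gamma>' t = vector_derivative (circlepath 0 r) (at t within {0..1})" for t
  have "((\<lambda>u. f u / (u - 0) ^ Suc n) has_contour_integral I) (circlepath 0 r)"
    unfolding I_def
    by (rule Cauchy_has_contour_integral_higher_derivative_circlepath[OF contf holr]) (use r in auto)
  then have I: "((\<lambda>t. f (circlepath 0 r t) / circlepath 0 r t ^ Suc n * \<gamma>' t) has_integral I) {0..1}"
    unfolding has_contour_integral_def \<gamma>'_def by simp
  define h where "h t = norm (f (of_real r * cis t))" for t
  have "continuous_on {0..2*pi} h"
    unfolding h_def using r
    by (intro continuous_on_norm continuous_on_compose2[OF contf] continuous_intros)
       (auto simp: norm_mult)
  from has_integral_rescale_to_unit_interval[OF this]
  have h: "((\<lambda>x. h (2*pi*x) * (2*pi / r^n)) has_integral hardy_mean1 f r * (2*pi / r^n)) {0..1}"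
    by (intro has_integral_mult_left) (simp add: hardy_mean1_def h_def[abs_def])
  have bound: "norm (f (circlepath 0 r t) / circlepath 0 r t ^ Suc n * \<gamma>' t) \<le> h (2*pi*t) * (2*pi / r^n)"
    if t: "t \<in> {0..1}" for t
  proof -
    have e: "exp (2 * of_real pi * \<i> * of_real t) = cis (2*pi*t)"
      by (simp add: cis_conv_exp mult_ac)
    have "\<gamma>' t = 2 * pi * \<i> * r * cis (2*pi*t)"
      using vector_derivative_circlepath01[of t 0 r] t e by (simp add: \<gamma>'_def)
    moreover have "circlepath 0 r t = of_real r * cis (2*pi*t)" by (simp add: circlepath e)
    ultimately show ?thesis
      unfolding h_def using r by (simp add: norm_mult norm_divide norm_power field_simps)
  qed
  have "norm I \<le> hardy_mean1 f r * (2*pi / r^n)"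
    using integral_norm_bound_integral[OF has_integral_integrable[OF I] has_integral_integrable[OF h] bound]
    unfolding integral_unique[OF I] integral_unique[OF h] .
  moreover have "norm I = 2*pi * norm (taylor_coeff f n)"
    by (simp add: taylor_coeff_def I_def norm_mult norm_divide)
  ultimately show ?thesis
    using r pi_gt_zero by (simp add: field_simps)
qed

lemma norm_taylor_coeff_le_hardy_norm1:
  assumes "f \<in> H1"
  shows "norm (taylor_coeff f n) \<le> hardy_norm1 f"
proof -
  have hol: "f holomorphic_on ball 0 1" and bdd: "bdd_above (hardy_mean1 f ` {0..<1})"
    using assms by (auto simp: H1_def)
  have "norm (taylor_coeff f n) * r^n \<le> hardy_norm1 f" if "0 < r" "r < 1" for r
  proof -
    have "norm (taylor_coeff f n) * r^n \<le> hardy_mean1 f r"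
      by (rule norm_taylor_coeff_mult_power_le_hardy_mean1[OF hol that])
    also have "\<dots> \<le> hardy_norm1 f"
      unfolding hardy_norm1_def using that by (intro cSUP_upper bdd) auto
    finally show ?thesis .
  qed
  then have "eventually (\<lambda>r. norm (taylor_coeff f n) * r^n \<le> hardy_norm1 f) (at_left (1::real))"
    using eventually_at_left_real[of 0 "1::real"] by (auto elim!: eventually_mono)
  moreover have "((\<lambda>r. norm (taylor_coeff f n) * r^n) \<longlongrightarrow> norm (taylor_coeff f n) * 1^n)
      (at_left (1::real))"
    by (intro tendsto_intros)
  ultimately show ?thesis
    using tendsto_upperbound by fastforce
qed

lemma bounded_seq_pointwise_convergent_subseq:
  fixes a :: "nat \<Rightarrow> nat \<Rightarrow> complex"
  assumes "\<And>k n. norm (a k n) \<le> C"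
  obtains l r where "strict_mono r" "\<And>n. norm (l n) \<le> C" "\<And>n. (\<lambda>k. a (r k) n) \<longlonglongrightarrow> l n"
proof -
  let ?B = "PiE (UNIV::nat set) (\<lambda>_. cball (0::complex) C)"
  have "compactin (product_topology (\<lambda>_. euclidean) UNIV) ?B"
    by (simp add: compactin_PiE compactin_euclidean_iff)
  then have "seq_compact ?B"
    by (simp add: euclidean_product_topology compactin_euclidean_iff compact_imp_seq_compact)
  moreover have "\<forall>k. a k \<in> ?B" using assms by (simp add: PiE_iff)
  ultimately obtain l r where l: "l \<in> ?B" and "strict_mono r" and lim: "(a \<circ> r) \<longlonglongrightarrow> l"
    by (rule seq_compactE)
  moreover have "(\<lambda>k. a (r k) n) \<longlonglongrightarrow> l n" for n
  proof -
    have "isCont (\<lambda>x::nat \<Rightarrow> complex. x n) l"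
      using continuous_on_product_coordinates[of n] continuous_on_eq_continuous_at[OF open_UNIV]
      by blast
    from isCont_tendsto_compose[OF this lim] show ?thesis by (simp add: o_def)
  qed
  ultimately show ?thesis using that by (auto simp: PiE_iff)
qed

lemma seq_lattice_add:
  assumes "banach_seq_lattice E N" "x \<in> E" "y \<in> E"
  shows "(\<lambda>n. x n + y n) \<in> E" "N (\<lambda>n. x n + y n) \<le> N x + N y"
  using assms unfolding banach_seq_lattice_def banach_fun_space_def by auto

lemma seq_lattice_norm_nonneg:
  assumes "banach_seq_lattice E N" "x \<in> E"
  shows "0 \<le> N x"
  using assms unfolding banach_seq_lattice_def banach_fun_space_def by auto

lemma seq_lattice_norm_zero:
  assumes "banach_seq_lattice E N"
  shows "N (\<lambda>n. 0) = 0"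
  using assms unfolding banach_seq_lattice_def banach_fun_space_def by auto

lemma seq_lattice_dominated:
  assumes "banach_seq_lattice E N" "x \<in> E" "0 \<le> B" "\<And>n. norm (y n) \<le> B * norm (x n)"
  shows "y \<in> E" "N y \<le> B * N x"
proof -
  have Bx: "(\<lambda>n. of_real B * x n) \<in> E" "N (\<lambda>n. of_real B * x n) = B * N x"
    using assms(1-3) unfolding banach_seq_lattice_def banach_fun_space_def by auto
  moreover have "norm (y n) \<le> norm (of_real B * x n)" for n
    using assms(3,4) by (simp add: norm_mult)
  ultimately show "y \<in> E" "N y \<le> B * N x"
    using assms(1) unfolding banach_seq_lattice_def by metis+
qed

lemma seq_lattice_mult_bounded:
  assumes "banach_seq_lattice E N" "lam \<in> E" "0 \<le> B" "\<And>n. norm (c n) \<le> B"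
  shows "(\<lambda>n. lam n * c n) \<in> E" "N (\<lambda>n. lam n * c n) \<le> B * N lam"
proof -
  have "norm (lam n * c n) \<le> B * norm (lam n)" for n
    using mult_right_mono[OF assms(4)[of n] norm_ge_zero[of "lam n"]] by (simp add: norm_mult mult.commute)
  then show "(\<lambda>n. lam n * c n) \<in> E" "N (\<lambda>n. lam n * c n) \<le> B * N lam"
    using seq_lattice_dominated[OF assms(1-3)] by auto
qed

lemma seq_lattice_truncation_le:
  assumes E: "banach_seq_lattice E N" and lam: "lam \<in> E"
  shows "N (\<lambda>n. lam n * (if n < m then w n else 0)) \<le> N lam * (\<Sum>j<m. norm (w j))"
proof (induction m)
  case 0
  then show ?case using seq_lattice_norm_zero[OF E] by simp
next
  case (Suc m)
  define front where "front n = (if n < m then w n else 0)" for n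
  define single where "single n = (if n = m then w n else 0)" for n
  have M: "0 \<le> (\<Sum>j<m. norm (w j))" by (simp add: sum_nonneg)
  have "norm (front n) \<le> (\<Sum>j<m. norm (w j))" for n
    unfolding front_def using M by (auto intro: member_le_sum)
  note front = seq_lattice_mult_bounded(1)[where c=front, OF E lam M this]
  have "norm (single n) \<le> norm (w m)" for n by (simp add: single_def)
  note single = seq_lattice_mult_bounded[where c=single, OF E lam norm_ge_zero this]
  have "(\<lambda>n. lam n * (if n < Suc m then w n else 0)) = (\<lambda>n. lam n * front n + lam n * single n)"
    by (auto simp: front_def single_def)
  then have "N (\<lambda>n. lam n * (if n < Suc m then w n else 0))
      \<le> N (\<lambda>n. lam n * front n) + N (\<lambda>n. lam n * single n)"
    using seq_lattice_add(2)[OF E front single(1)] by simp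
  also have "\<dots> \<le> N lam * (\<Sum>j<m. norm (w j)) + norm (w m) * N lam"
    using Suc.IH single(2) unfolding front_def by simp
  finally show ?case by (simp add: algebra_simps)
qed

definition abs_tail :: "(nat \<Rightarrow> complex) \<Rightarrow> nat \<Rightarrow> nat \<Rightarrow> complex" where
  "abs_tail x m n = (if m \<le> n then of_real (norm (x n)) else 0)"

lemma seq_lattice_abs_tail:
  assumes "banach_seq_lattice E N" "x \<in> E"
  shows "abs_tail x m \<in> E"
  using seq_lattice_dominated(1)[OF assms, of 1 "abs_tail x m"] by (simp add: abs_tail_def)

lemma order_continuous_abs_tail_tendsto_zero:
  assumes E: "banach_seq_lattice E N" and oc: "order_continuous E N" and x: "x \<in> E"
  shows "(\<lambda>m. N (abs_tail x m)) \<longlonglongrightarrow> 0"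
proof -
  have "(\<lambda>m. abs_tail x m n) \<longlonglongrightarrow> 0" for n
    by (rule tendsto_eventually)
       (auto simp: abs_tail_def eventually_sequentially intro!: exI[of _ "Suc n"])
  then show ?thesis
    using oc seq_lattice_abs_tail[OF E x] unfolding order_continuous_def
    by (simp add: abs_tail_def)
qed

lemma seq_lattice_head_tail_le:
  assumes E: "banach_seq_lattice E N" and lam: "lam \<in> E"
    and B: "0 \<le> B" "\<And>n. norm (w n) \<le> B"
  shows "N (\<lambda>n. lam n * w n) \<le> N lam * (\<Sum>j<m. norm (w j)) + B * N (abs_tail lam m)"
proof -
  define head where "head n = lam n * (if n < m then w n else 0)" for n
  define tail where "tail n = (if m \<le> n then lam n * w n else 0)" for n
  have head: "head \<in> E" unfolding head_def
    by (rule seq_lattice_mult_bounded(1)[OF E lam B(1)]) (simp add: B)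
  have "norm (tail n) \<le> B * norm (abs_tail lam m n)" for n
    using mult_left_mono[OF B(2)[of n] norm_ge_zero[of "lam n"]]
    by (simp add: tail_def abs_tail_def norm_mult mult.commute)
  note tail = seq_lattice_dominated[OF E seq_lattice_abs_tail[OF E lam] B(1) this]
  have "(\<lambda>n. lam n * w n) = (\<lambda>n. head n + tail n)" by (auto simp: head_def tail_def)
  then have "N (\<lambda>n. lam n * w n) \<le> N head + N tail"
    using seq_lattice_add(2)[OF E head tail(1)] by simp
  then show ?thesis
    using tail(2) seq_lattice_truncation_le[OF E lam, of m w] unfolding head_def by linarith
qed

lemma order_continuous_mult_tendsto_zero:
  assumes E: "banach_seq_lattice E N" and oc: "order_continuous E N" and lam: "lam \<in> E"
    and B: "0 \<le> B" "\<And>k n. norm (w k n) \<le> B" and w: "\<And>n. (\<lambda>k. w k n) \<longlonglongrightarrow> 0"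
  shows "(\<lambda>k. N (\<lambda>n. lam n * w k n)) \<longlonglongrightarrow> 0"
proof (rule LIMSEQ_I)
  fix e :: real assume e: "0 < e"
  have "(\<lambda>m. B * N (abs_tail lam m)) \<longlonglongrightarrow> 0"
    using order_continuous_abs_tail_tendsto_zero[OF E oc lam] by (rule tendsto_mult_right_zero)
  from order_tendstoD(2)[OF this, of "e/2"] e obtain m where m: "B * N (abs_tail lam m) < e/2"
    by (auto simp: eventually_sequentially)
  have "(\<lambda>k. N lam * (\<Sum>j<m. norm (w k j))) \<longlonglongrightarrow> 0"
    using w by (intro tendsto_mult_right_zero tendsto_null_sum tendsto_norm_zero)
  from order_tendstoD(2)[OF this, of "e/2"] e obtain K
    where K: "\<And>k. k \<ge> K \<Longrightarrow> N lam * (\<Sum>j<m. norm (w k j)) < e/2"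
    by (auto simp: eventually_sequentially)
  have "norm (N (\<lambda>n. lam n * w k n) - 0) < e" if "k \<ge> K" for k
    using seq_lattice_norm_nonneg[OF E seq_lattice_mult_bounded(1)[OF E lam B]]
      seq_lattice_head_tail_le[OF E lam B(1), of "w k" m] B(2) K[OF that] m
    by simp
  then show "\<exists>K. \<forall>k\<ge>K. norm (N (\<lambda>n. lam n * w k n) - 0) < e" by blast
qed

lemma order_continuous_mult_bounded_convergent_subseq:
  fixes a :: "nat \<Rightarrow> nat \<Rightarrow> complex"
  assumes E: "banach_seq_lattice E N" and oc: "order_continuous E N" and lam: "lam \<in> E"
    and bd: "\<And>k n. norm (a k n) \<le> C"
  shows "\<exists>r g. strict_mono r \<and> g \<in> E \<and> (\<lambda>k. N (\<lambda>n. lam n * a (r k) n - g n)) \<longlonglongrightarrow> 0"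
proof -
  obtain l r where r: "strict_mono r" and l: "\<And>n. norm (l n) \<le> C"
    and lim: "\<And>n. (\<lambda>k. a (r k) n) \<longlonglongrightarrow> l n"
    by (rule bounded_seq_pointwise_convergent_subseq[of a, OF bd]) blast
  have C: "0 \<le> C"
    using order_trans[OF norm_ge_zero bd] .
  have "norm (a (r k) n - l n) \<le> 2 * C" for k n
    using norm_triangle_ineq4[of "a (r k) n" "l n"] bd[of "r k" n] l[of n] by simp
  with C lim have "(\<lambda>k. N (\<lambda>n. lam n * (a (r k) n - l n))) \<longlonglongrightarrow> 0"
    by (intro order_continuous_mult_tendsto_zero[OF E oc lam, where B="2 * C"])
      (auto intro: LIM_zero)
  moreover have "(\<lambda>n. lam n * l n) \<in> E"
    using seq_lattice_mult_bounded(1)[OF E lam C l] .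
  ultimately show ?thesis
    using r by (intro exI[of _ r] exI[of _ "\<lambda>n. lam n * l n"]) (simp add: right_diff_distrib)
qed

lemma banach_analytic_space_norm_nonneg:
  assumes "banach_analytic_space X N" "f \<in> X"
  shows "0 \<le> N f"
  using assms unfolding banach_analytic_space_def banach_fun_space_def by auto

lemma cont_incl_H1_taylor_coeff_bound:
  assumes X: "banach_analytic_space X N" and incl: "cont_incl_H1 X N"
  obtains C where "0 \<le> C" "\<And>f n. f \<in> X \<Longrightarrow> norm (taylor_coeff f n) \<le> C * N f"
proof -
  obtain C0 where H1: "X \<subseteq> H1" and C0: "\<forall>f\<in>X. hardy_norm1 f \<le> C0 * N f"
    using incl unfolding cont_incl_H1_def by blast
  have "norm (taylor_coeff f n) \<le> max C0 0 * N f" if f: "f \<in> X" for f n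
  proof -
    have "0 \<le> N f" using banach_analytic_space_norm_nonneg[OF X f] .
    have "norm (taylor_coeff f n) \<le> hardy_norm1 f"
      using norm_taylor_coeff_le_hardy_norm1 H1 f by blast
    also have "\<dots> \<le> C0 * N f" using C0 f by blast
    also have "\<dots> \<le> max C0 0 * N f" using \<open>0 \<le> N f\<close> by (intro mult_right_mono) simp_all
    finally show ?thesis .
  qed
  then show ?thesis using that[of "max C0 0"] by simp
qed

theorem proposition2p1:
  fixes X :: "(complex \<Rightarrow> complex) set" and NX :: "(complex \<Rightarrow> complex) \<Rightarrow> real"
    and E :: "(nat \<Rightarrow> complex) set" and NE :: "(nat \<Rightarrow> complex) \<Rightarrow> real"
    and lam :: "nat \<Rightarrow> complex"
  assumes "banach_analytic_space X NX"
    and "cont_incl_H1 X NX"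
    and "banach_seq_lattice E NE"
    and "order_continuous E NE"
    and "lam \<in> E"
  shows "(\<forall>f\<in>X. (\<lambda>n. lam n * taylor_coeff f n) \<in> E)
       \<and> (\<exists>C. \<forall>f\<in>X. NE (\<lambda>n. lam n * taylor_coeff f n) \<le> C * NX f)
       \<and> (\<forall>s :: nat \<Rightarrow> complex \<Rightarrow> complex. (\<forall>k. s k \<in> X \<and> NX (s k) \<le> 1) \<longrightarrow>
            (\<exists>r g. strict_mono r \<and> g \<in> E \<and>
               (\<lambda>k. NE (\<lambda>n. lam n * taylor_coeff (s (r k)) n - g n)) \<longlonglongrightarrow> 0))"
proof -
  note E = assms(3) and oc = assms(4) and lam = assms(5)
  obtain C where C: "0 \<le> C" and coeff: "\<And>f n. f \<in> X \<Longrightarrow> norm (taylor_coeff f n) \<le> C * NX f"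
    by (rule cont_incl_H1_taylor_coeff_bound[OF assms(1,2)]) blast
  have bounded: "(\<lambda>n. lam n * taylor_coeff f n) \<in> E \<and>
      NE (\<lambda>n. lam n * taylor_coeff f n) \<le> (C * NE lam) * NX f" if "f \<in> X" for f
    using seq_lattice_mult_bounded[where c="taylor_coeff f", OF E lam _ coeff[OF that]] C
      banach_analytic_space_norm_nonneg[OF assms(1) that]
    by (simp add: mult_ac)
  have "\<exists>r g. strict_mono r \<and> g \<in> E \<and>
      (\<lambda>k. NE (\<lambda>n. lam n * taylor_coeff (s (r k)) n - g n)) \<longlonglongrightarrow> 0"
    if s: "\<forall>k. s k \<in> X \<and> NX (s k) \<le> 1" for s :: "nat \<Rightarrow> complex \<Rightarrow> complex"
  proof (rule order_continuous_mult_bounded_convergent_subseq[OF E oc lam])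
    show "norm (taylor_coeff (s k) n) \<le> C" for k n
      using coeff[of "s k" n] mult_left_mono[of "NX (s k)" 1 C] s C by auto
  qed
  then show ?thesis using bounded by blast
qed

end
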